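(* If $\mathcal{C}$ is a properly-splitted hypergraph, then $\psi(\mathcal{C})=\operatorname{conn_h}(\operatorname{Ind}(\mathcal{C}))+2$.
   Context: A hypergraph $\mathcal{C}$ on a finite vertex set $V$ is a family of pairwise incomparable subsets of $V$ (its edges), each of cardinality at least $2$; vertices lying in no edge are allowed. The independence complex $\operatorname{Ind}(\mathcal{C})$ is the simplicial complex on $V$ whose faces are the subsets of $V$ containing no edge of $\mathcal{C}$ (if $V=\emptyset$ it is $\{\emptyset\}$). For an edge $F$: $\mathcal{C}-F$ is the hypergraph on $V$ with edge set $\mathcal{C}\setminus\{F\}$; $N_{\mathcal{C}}(F)=\bigcup\{E\setminus F : E\in\mathcal{C},\ |E\setminus F|=1\}$; and $\mathcal{C}:F$ is the hypergraph on $V\setminus(F\cup N_{\mathcal{C}}(F))$ whose edges are the members of cardinality at least $2$ among the inclusion-minimal members of the family $\{E\setminus F : E\in \mathcal{C}-F\}$. The number $\psi(\mathcal{C})\in\mathbb{Z}_{\ge 0}\cup\{\infty\}$ is defined recursively: $\psi(\mathcal{C})=0$ if $V=\emptyset$; $\psi(\mathcal{C})=\infty$ if $V\neq\emptyset$ and $\mathcal{C}$ has no edges; otherwise $\psi(\mathcal{C})=\max_{F\in\mathcal{C}}\min\{\psi(\mathcal{C}-F),\ \psi(\mathcal{C}:F)+|F|-1\}$. The homological connectivity $\operatorname{conn_h}(\Delta)$ is the largest integer $k$ such that $\tilde H_i(\Delta;\mathbb{Z})=0$ for all $i\le k$ ($\infty$ if all vanish; $\operatorname{conn_h}(\{\emptyset\})=-2$).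 A hypergraph $\mathcal{C}$ is properly-splitted (recursively on the number of edges) if either $\mathcal{C}$ has no edges, or $\mathcal{C}$ has an edge $F$ with $\operatorname{conn_h}(\operatorname{Ind}(\mathcal{C}:F))\ge \operatorname{conn_h}(\operatorname{Ind}(\mathcal{C}))-|F|+1$ such that both $\mathcal{C}-F$ and $\mathcal{C}:F$ are properly-splitted. *)

theory Defs
  imports Main "HOL-Library.Extended_Real"
begin

definition hypergraph :: "'a set \<Rightarrow> 'a set set \<Rightarrow> bool" where
  "hypergraph V C \<longleftrightarrow> finite V \<and> (\<forall>E\<in>C. E \<subseteq> V \<and> card E \<ge> 2) \<and>
     (\<forall>E\<in>C. \<forall>E'\<in>C. E \<subseteq> E' \<longrightarrow> E = E')"

definition Ind :: "'a set \<Rightarrow> 'a set set \<Rightarrow> 'a set set" where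
  "Ind V C = {S. S \<subseteq> V \<and> \<not> (\<exists>E\<in>C. E \<subseteq> S)}"

definition nbhd :: "'a set set \<Rightarrow> 'a set \<Rightarrow> 'a set" where
  "nbhd C F = \<Union>{E - F | E. E \<in> C \<and> card (E - F) = 1}"

definition colon_V :: "'a set \<Rightarrow> 'a set set \<Rightarrow> 'a set \<Rightarrow> 'a set" where
  "colon_V V C F = V - (F \<union> nbhd C F)"

definition colon_E :: "'a set set \<Rightarrow> 'a set \<Rightarrow> 'a set set" where
  "colon_E C F = (let M = {E - F | E. E \<in> C - {F}} in
     {G. G \<in> M \<and> \<not> (\<exists>H\<in>M. H \<subset> G) \<and> card G \<ge> 2})"

text \<open>psi, defined by recursion on the number of edges (fuel = number of edges;
  both recursive calls have strictly fewer edges).\<close>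
fun psi_aux :: "nat \<Rightarrow> 'a set \<Rightarrow> 'a set set \<Rightarrow> ereal" where
  "psi_aux 0 V C = (if V = {} then 0 else \<infinity>)"
| "psi_aux (Suc n) V C =
    (if V = {} then 0 else if C = {} then \<infinity> else
     Max ((\<lambda>F. min (psi_aux n V (C - {F}))
                    (psi_aux n (colon_V V C F) (colon_E C F) + ereal (real (card F) - 1))) ` C))"

definition psi :: "'a set \<Rightarrow> 'a set set \<Rightarrow> ereal" where
  "psi V C = psi_aux (card C) V C"

text \<open>Augmented oriented simplicial chain complex of a complex \<Delta> (a family of
  finite subsets of a linearly ordered vertex type); a k-chain is an integer
  function supported on faces of cardinality k+1 (the empty face in degree -1).\<close>

definition is_chain :: "'a set set \<Rightarrow> int \<Rightarrow> ('a set \<Rightarrow> int) \<Rightarrow> bool" where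
  "is_chain \<Delta> k c \<longleftrightarrow> (\<forall>\<sigma>. c \<sigma> \<noteq> 0 \<longrightarrow> \<sigma> \<in> \<Delta> \<and> int (card \<sigma>) = k + 1)"

definition bd :: "'a::linorder set set \<Rightarrow> ('a set \<Rightarrow> int) \<Rightarrow> 'a set \<Rightarrow> int" where
  "bd \<Delta> c \<tau> = (if \<tau> \<in> \<Delta> then
      (\<Sum>v\<in>(\<Union>\<Delta>) - \<tau>. (if insert v \<tau> \<in> \<Delta>
          then (-1) ^ card {u\<in>\<tau>. u < v} * c (insert v \<tau>) else 0))
     else 0)"

definition hom_vanishes :: "'a::linorder set set \<Rightarrow> int \<Rightarrow> bool" where
  "hom_vanishes \<Delta> i \<longleftrightarrow> (\<forall>c. is_chain \<Delta> i c \<and> bd \<Delta> c = (\<lambda>_. 0) \<longrightarrow>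
      (\<exists>d. is_chain \<Delta> (i + 1) d \<and> bd \<Delta> d = c))"

definition conn_h :: "'a::linorder set set \<Rightarrow> ereal" where
  "conn_h \<Delta> = (if \<forall>i. hom_vanishes \<Delta> i then \<infinity>
     else ereal (of_int (GREATEST k. \<forall>i\<le>k. hom_vanishes \<Delta> i)))"

inductive properly_splitted :: "'a::linorder set \<Rightarrow> 'a set set \<Rightarrow> bool" where
  empty: "properly_splitted V {}"
| split: "F \<in> C \<Longrightarrow>
    conn_h (Ind (colon_V V C F) (colon_E C F)) \<ge> conn_h (Ind V C) - ereal (real (card F)) + 1 \<Longrightarrow>
    properly_splitted V (C - {F}) \<Longrightarrow>
    properly_splitted (colon_V V C F) (colon_E C F) \<Longrightarrow>
    properly_splitted V C"

end

theory Submission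
  imports Defs
begin

text \<open>Put \<open>B = Ind(C - F)\<close>, \<open>A = Ind(C)\<close> and \<open>L = Ind(C:F)\<close>. Then \<open>A\<close> consists of the faces of \<open>B\<close>
  not containing \<open>F\<close>, and the faces of \<open>B\<close> containing \<open>F\<close> are exactly the \<open>F \<union> \<tau>\<close> with
  \<open>\<tau> \<in> L\<close>. So the relative chain complex of \<open>(B, A)\<close> is that of \<open>L\<close> shifted up by \<open>card F\<close>,
  and the long exact sequence of the pair gives
  \<open>conn_h A \<ge> min (conn_h B) (conn_h L + card F - 1)\<close>, with equality when
  \<open>conn_h L \<ge> conn_h A - card F + 1\<close>. Following the recursion defining \<open>psi\<close>, the inequality
  yields \<open>psi \<le> conn_h + 2\<close> for every hypergraph, and the equality case yields the reverse bound
  along a proper splitting.\<close>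


section \<open>Oriented simplicial chains\<close>

definition incidence_sign :: "'a::linorder set \<Rightarrow> 'a \<Rightarrow> int" where
  "incidence_sign \<tau> v = (-1) ^ card {u\<in>\<tau>. u < v}"

lemma incidence_sign_square [simp]: "incidence_sign \<tau> v * incidence_sign \<tau> v = 1"
  unfolding incidence_sign_def by simp

lemma incidence_sign_insert:
  assumes "finite \<tau>" "x \<notin> \<tau>"
  shows "incidence_sign (insert x \<tau>) v = (if x < v then - incidence_sign \<tau> v else incidence_sign \<tau> v)"
proof (cases "x < v")
  case True
  then have "{u\<in>insert x \<tau>. u < v} = insert x {u\<in>\<tau>. u < v}" by auto
  with True assms show ?thesis by (simp add: incidence_sign_def)
next
  case False
  then have "{u\<in>insert x \<tau>. u < v} = {u\<in>\<tau>. u < v}" by auto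
  with False show ?thesis by (simp add: incidence_sign_def)
qed

lemma incidence_sign_insert_swap:
  assumes "finite \<rho>" "v \<noteq> w" "v \<notin> \<rho>" "w \<notin> \<rho>"
  shows "incidence_sign \<rho> v * incidence_sign (insert v \<rho>) w
       = - (incidence_sign \<rho> w * incidence_sign (insert w \<rho>) v)"
  using incidence_sign_insert[OF assms(1,3), of w] incidence_sign_insert[OF assms(1,4), of v] assms(2)
  by (cases "v < w") auto

lemma incidence_sign_insert_insert:
  assumes "finite \<rho>" "v \<noteq> w" "v \<notin> \<rho>" "w \<notin> \<rho>"
  shows "incidence_sign (insert v \<rho>) w * incidence_sign (insert w \<rho>) v
       = - (incidence_sign \<rho> v * incidence_sign \<rho> w)"
  using incidence_sign_insert[OF assms(1,3), of w] incidence_sign_insert[OF assms(1,4), of v] assms(2)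
  by (cases "v < w") (auto simp: mult.commute)

lemma incidence_sign_Un:
  assumes "finite F" "finite \<tau>" "F \<inter> \<tau> = {}"
  shows "incidence_sign (F \<union> \<tau>) v = incidence_sign F v * incidence_sign \<tau> v"
proof -
  have "{u\<in>F \<union> \<tau>. u < v} = {u\<in>F. u < v} \<union> {u\<in>\<tau>. u < v}" by auto
  moreover have "card ({u\<in>F. u < v} \<union> {u\<in>\<tau>. u < v}) = card {u\<in>F. u < v} + card {u\<in>\<tau>. u < v}"
    using assms by (intro card_Un_disjoint) auto
  ultimately show ?thesis unfolding incidence_sign_def by (simp add: power_add)
qed

lemma bd_eq:
  "bd \<Delta> c \<tau> = (if \<tau> \<in> \<Delta> then
     (\<Sum>v\<in>\<Union>\<Delta> - \<tau>. if insert v \<tau> \<in> \<Delta> then incidence_sign \<tau> v * c (insert v \<tau>) else 0) else 0)"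
  unfolding bd_def incidence_sign_def ..

lemma bd_eq_sum_superset:
  assumes "finite W" "\<Union>\<Delta> \<subseteq> W"
  shows "bd \<Delta> c \<tau> = (if \<tau> \<in> \<Delta> then
     (\<Sum>v\<in>W - \<tau>. if insert v \<tau> \<in> \<Delta> then incidence_sign \<tau> v * c (insert v \<tau>) else 0) else 0)"
proof -
  have "(\<Sum>v\<in>\<Union>\<Delta> - \<tau>. if insert v \<tau> \<in> \<Delta> then incidence_sign \<tau> v * c (insert v \<tau>) else 0)
      = (\<Sum>v\<in>W - \<tau>. if insert v \<tau> \<in> \<Delta> then incidence_sign \<tau> v * c (insert v \<tau>) else 0)"
    using assms by (intro sum.mono_neutral_left) auto
  then show ?thesis unfolding bd_eq by simp
qed

lemma bd_add: "bd \<Delta> (\<lambda>\<sigma>. c \<sigma> + d \<sigma>) = (\<lambda>\<tau>. bd \<Delta> c \<tau> + bd \<Delta> d \<tau>)"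
proof
  fix \<tau>
  have "(\<Sum>v\<in>\<Union>\<Delta> - \<tau>. if insert v \<tau> \<in> \<Delta> then incidence_sign \<tau> v * (c (insert v \<tau>) + d (insert v \<tau>)) else 0)
    = (\<Sum>v\<in>\<Union>\<Delta> - \<tau>. (if insert v \<tau> \<in> \<Delta> then incidence_sign \<tau> v * c (insert v \<tau>) else 0)
        + (if insert v \<tau> \<in> \<Delta> then incidence_sign \<tau> v * d (insert v \<tau>) else 0))"
    by (intro sum.cong refl) (simp add: algebra_simps)
  then show "bd \<Delta> (\<lambda>\<sigma>. c \<sigma> + d \<sigma>) \<tau> = bd \<Delta> c \<tau> + bd \<Delta> d \<tau>"
    unfolding bd_eq by (simp add: sum.distrib)
qed

lemma bd_diff: "bd \<Delta> (\<lambda>\<sigma>. c \<sigma> - d \<sigma>) = (\<lambda>\<tau>. bd \<Delta> c \<tau> - bd \<Delta> d \<tau>)"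
proof
  fix \<tau>
  have "(\<Sum>v\<in>\<Union>\<Delta> - \<tau>. if insert v \<tau> \<in> \<Delta> then incidence_sign \<tau> v * (c (insert v \<tau>) - d (insert v \<tau>)) else 0)
    = (\<Sum>v\<in>\<Union>\<Delta> - \<tau>. (if insert v \<tau> \<in> \<Delta> then incidence_sign \<tau> v * c (insert v \<tau>) else 0)
        - (if insert v \<tau> \<in> \<Delta> then incidence_sign \<tau> v * d (insert v \<tau>) else 0))"
    by (intro sum.cong refl) (simp add: algebra_simps)
  then show "bd \<Delta> (\<lambda>\<sigma>. c \<sigma> - d \<sigma>) \<tau> = bd \<Delta> c \<tau> - bd \<Delta> d \<tau>"
    unfolding bd_eq by (simp add: sum_subtractf)
qed

lemma bd_zero: "bd \<Delta> (\<lambda>_. 0) = (\<lambda>_. 0)"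
  by (simp add: fun_eq_iff bd_eq sum.neutral)

lemma is_chain_add:
  assumes "is_chain \<Delta> k c" "is_chain \<Delta> k d"
  shows "is_chain \<Delta> k (\<lambda>\<sigma>. c \<sigma> + d \<sigma>)"
proof -
  have "c \<sigma> + d \<sigma> \<noteq> 0 \<Longrightarrow> c \<sigma> \<noteq> 0 \<or> d \<sigma> \<noteq> 0" for \<sigma> by auto
  with assms show ?thesis unfolding is_chain_def by blast
qed

lemma is_chain_diff:
  assumes "is_chain \<Delta> k c" "is_chain \<Delta> k d"
  shows "is_chain \<Delta> k (\<lambda>\<sigma>. c \<sigma> - d \<sigma>)"
proof -
  have "c \<sigma> - d \<sigma> \<noteq> 0 \<Longrightarrow> c \<sigma> \<noteq> 0 \<or> d \<sigma> \<noteq> 0" for \<sigma> by auto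
  with assms show ?thesis unfolding is_chain_def by blast
qed

lemma is_chain_mono: "A \<subseteq> B \<Longrightarrow> is_chain A k c \<Longrightarrow> is_chain B k c"
  unfolding is_chain_def by blast

lemma is_chainD: "is_chain \<Delta> k c \<Longrightarrow> c \<sigma> \<noteq> 0 \<Longrightarrow> \<sigma> \<in> \<Delta> \<and> int (card \<sigma>) = k + 1"
  unfolding is_chain_def by blast

lemma is_chain_support: "is_chain \<Delta> k c \<Longrightarrow> c \<sigma> \<noteq> 0 \<Longrightarrow> \<sigma> \<in> \<Delta>"
  by (simp add: is_chainD)

lemma is_chain_bd:
  assumes "\<forall>\<sigma>\<in>\<Delta>. finite \<sigma>" "is_chain \<Delta> (i + 1) d"
  shows "is_chain \<Delta> i (bd \<Delta> d)"
  unfolding is_chain_def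
proof (intro allI impI)
  fix \<tau> assume nz: "bd \<Delta> d \<tau> \<noteq> 0"
  then have "\<tau> \<in> \<Delta>" by (auto simp: bd_eq split: if_splits)
  with nz have "(\<Sum>v\<in>\<Union>\<Delta> - \<tau>. if insert v \<tau> \<in> \<Delta> then incidence_sign \<tau> v * d (insert v \<tau>) else 0) \<noteq> 0"
    by (simp add: bd_eq)
  then obtain v where "v \<in> \<Union>\<Delta> - \<tau>"
    "(if insert v \<tau> \<in> \<Delta> then incidence_sign \<tau> v * d (insert v \<tau>) else 0) \<noteq> 0"
    by (rule sum.not_neutral_contains_not_neutral)
  then have "v \<notin> \<tau>" "d (insert v \<tau>) \<noteq> 0" by (auto split: if_splits)
  with assms(2) have "int (card (insert v \<tau>)) = i + 1 + 1"
    unfolding is_chain_def by blast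
  moreover have "finite \<tau>" using assms(1) \<open>\<tau> \<in> \<Delta>\<close> by blast
  ultimately show "\<tau> \<in> \<Delta> \<and> int (card \<tau>) = i + 1"
    using \<open>\<tau> \<in> \<Delta>\<close> \<open>v \<notin> \<tau>\<close> by simp
qed

definition downclosed :: "'a set set \<Rightarrow> bool" where
  "downclosed \<Delta> \<longleftrightarrow> (\<forall>\<sigma>\<in>\<Delta>. \<forall>\<rho>. \<rho> \<subseteq> \<sigma> \<longrightarrow> \<rho> \<in> \<Delta>)"

lemma sum_sum_antisym_eq_0:
  fixes h :: "'b \<Rightarrow> 'b \<Rightarrow> 'c::linordered_ab_group_add"
  assumes "\<And>v w. v \<in> X \<Longrightarrow> w \<in> X \<Longrightarrow> v \<noteq> w \<Longrightarrow> h w v = - h v w"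
  shows "(\<Sum>v\<in>X. \<Sum>w\<in>X. if v = w then 0 else h v w) = 0"
proof -
  let ?S = "\<Sum>v\<in>X. \<Sum>w\<in>X. if v = w then 0 else h v w"
  have "?S = (\<Sum>w\<in>X. \<Sum>v\<in>X. if v = w then 0 else h v w)" by (rule sum.swap)
  also have "\<dots> = (\<Sum>w\<in>X. \<Sum>v\<in>X. - (if w = v then 0 else h w v))"
  proof (intro sum.cong refl)
    fix w v assume "w \<in> X" "v \<in> X"
    then show "(if v = w then 0 else h v w) = - (if w = v then 0 else h w v)"
      using assms[of w v] by (cases "v = w") simp_all
  qed
  also have "\<dots> = - ?S" by (simp add: sum_negf)
  finally show ?thesis by simp
qed

lemma bd_coface_expansion:
  assumes "finite W" "\<Union>\<Delta> \<subseteq> W" "downclosed \<Delta>"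
    and supp: "\<And>\<sigma>. g \<sigma> \<noteq> 0 \<Longrightarrow> \<sigma> \<in> \<Delta>" and v: "v \<in> W - \<rho>"
  shows "(if insert v \<rho> \<in> \<Delta> then incidence_sign \<rho> v * bd \<Delta> g (insert v \<rho>) else 0)
       = (\<Sum>w\<in>W - \<rho>. if v = w then 0
            else incidence_sign \<rho> v * incidence_sign (insert v \<rho>) w * g (insert w (insert v \<rho>)))"
proof -
  let ?h = "\<lambda>w. incidence_sign \<rho> v * incidence_sign (insert v \<rho>) w * g (insert w (insert v \<rho>))"
  have g_outside: "g \<sigma> = 0" if "\<sigma> \<notin> \<Delta>" for \<sigma>
    using supp that by blast
  show ?thesis
  proof (cases "insert v \<rho> \<in> \<Delta>")
    case True
    have "(\<Sum>w\<in>W - \<rho>. if v = w then 0 else ?h w) = (\<Sum>w\<in>W - insert v \<rho>. ?h w)"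
      using assms(1) v by (intro sum.mono_neutral_cong_right) auto
    also have "\<dots> = incidence_sign \<rho> v * bd \<Delta> g (insert v \<rho>)"
    proof -
      have "bd \<Delta> g (insert v \<rho>)
          = (\<Sum>w\<in>W - insert v \<rho>. incidence_sign (insert v \<rho>) w * g (insert w (insert v \<rho>)))"
        unfolding bd_eq_sum_superset[OF assms(1,2)] using True
        by (simp, intro sum.cong refl) (simp add: g_outside)
      then show ?thesis by (simp add: sum_distrib_left mult.assoc)
    qed
    finally show ?thesis using True by simp
  next
    case False
    with assms(3) have "insert w (insert v \<rho>) \<notin> \<Delta>" for w
      unfolding downclosed_def by blast
    then have zero: "?h w = 0" for w by (simp add: g_outside)
    have "(\<Sum>w\<in>W - \<rho>. if v = w then 0 else ?h w) = 0"
      by (intro sum.neutral) (simp add: zero)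
    with False show ?thesis by simp
  qed
qed

lemma bd_bd_eq_0:
  assumes "finite W" "\<Union>\<Delta> \<subseteq> W" "downclosed \<Delta>" "\<forall>\<sigma>\<in>\<Delta>. finite \<sigma>"
    and supp: "\<And>\<sigma>. g \<sigma> \<noteq> 0 \<Longrightarrow> \<sigma> \<in> \<Delta>"
  shows "bd \<Delta> (bd \<Delta> g) \<rho> = 0"
proof (cases "\<rho> \<in> \<Delta>")
  case False
  then show ?thesis by (simp add: bd_eq)
next
  case True
  let ?h = "\<lambda>v w. incidence_sign \<rho> v * incidence_sign (insert v \<rho>) w * g (insert w (insert v \<rho>))"
  have "bd \<Delta> (bd \<Delta> g) \<rho>
      = (\<Sum>v\<in>W - \<rho>. if insert v \<rho> \<in> \<Delta> then incidence_sign \<rho> v * bd \<Delta> g (insert v \<rho>) else 0)"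
    using True by (simp add: bd_eq_sum_superset[OF assms(1,2), of "bd \<Delta> g"])
  also have "\<dots> = (\<Sum>v\<in>W - \<rho>. \<Sum>w\<in>W - \<rho>. if v = w then 0 else ?h v w)"
    by (rule sum.cong[OF refl]) (rule bd_coface_expansion[OF assms(1-3) supp])
  \<comment> \<open>adding \<open>v\<close> then \<open>w\<close> reaches the same face as adding \<open>w\<close> then \<open>v\<close>, with the opposite sign\<close>
  also have "\<dots> = 0"
  proof (rule sum_sum_antisym_eq_0)
    fix v w assume "v \<in> W - \<rho>" "w \<in> W - \<rho>" "v \<noteq> w"
    moreover have "finite \<rho>" using assms(4) True by blast
    ultimately show "?h w v = - ?h v w"
      using incidence_sign_insert_swap[of \<rho> v w] by (simp add: insert_commute)
  qed
  finally show ?thesis .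
qed


section \<open>The full simplex is acyclic\<close>

lemma bd_Pow:
  assumes "finite V" "\<rho> \<subseteq> V"
  shows "bd (Pow V) h \<rho> = (\<Sum>w\<in>V - \<rho>. incidence_sign \<rho> w * h (insert w \<rho>))"
  using assms by (simp add: bd_eq_sum_superset[of V])

definition cone :: "'a::linorder \<Rightarrow> ('a set \<Rightarrow> int) \<Rightarrow> 'a set \<Rightarrow> int" where
  "cone v g \<sigma> = (if v \<in> \<sigma> then incidence_sign (\<sigma> - {v}) v * g (\<sigma> - {v}) else 0)"

lemma bd_cone_off_apex:
  assumes "finite V" "v \<in> V" "\<rho> \<subseteq> V" "v \<notin> \<rho>"
  shows "bd (Pow V) (cone v g) \<rho> = g \<rho>"
proof -
  \<comment> \<open>only the coface \<open>insert v \<rho>\<close> contains the apex\<close>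
  have "(\<Sum>w\<in>V - \<rho> - {v}. incidence_sign \<rho> w * cone v g (insert w \<rho>)) = 0"
    using assms by (intro sum.neutral) (auto simp: cone_def)
  moreover have "cone v g (insert v \<rho>) = incidence_sign \<rho> v * g \<rho>"
    using assms(4) by (simp add: cone_def)
  moreover have "bd (Pow V) (cone v g) \<rho> = incidence_sign \<rho> v * cone v g (insert v \<rho>)
      + (\<Sum>w\<in>V - \<rho> - {v}. incidence_sign \<rho> w * cone v g (insert w \<rho>))"
    using assms by (simp add: bd_Pow sum.remove)
  ultimately show ?thesis by (simp add: mult.assoc[symmetric])
qed

lemma bd_cone_add_cone_bd_at_apex:
  assumes "finite V" "v \<in> V" "\<rho> \<subseteq> V" "v \<in> \<rho>"
  shows "bd (Pow V) (cone v g) \<rho> + cone v (bd (Pow V) g) \<rho> = g \<rho>"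
proof -
  define r where "r = \<rho> - {v}"
  have \<rho>: "\<rho> = insert v r" and "v \<notin> r" "r \<subseteq> V" "finite r"
    using assms unfolding r_def by (auto intro: finite_subset)
  \<comment> \<open>the two sides pair off term by term, with opposite signs\<close>
  have opposite: "incidence_sign \<rho> w * incidence_sign (insert w r) v = - (incidence_sign r v * incidence_sign r w)"
    if "w \<in> V - \<rho>" for w
    using incidence_sign_insert_insert[of r v w] that \<rho> \<open>finite r\<close> \<open>v \<notin> r\<close> by auto
  have "bd (Pow V) (cone v g) \<rho> = (\<Sum>w\<in>V - \<rho>. incidence_sign \<rho> w * cone v g (insert w \<rho>))"
    using assms by (simp add: bd_Pow)
  also have "\<dots> = (\<Sum>w\<in>V - \<rho>. incidence_sign \<rho> w * incidence_sign (insert w r) v * g (insert w r))"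
  proof (rule sum.cong[OF refl])
    fix w assume "w \<in> V - \<rho>"
    then have "insert w \<rho> - {v} = insert w r" using \<rho> \<open>v \<notin> r\<close> by auto
    with assms(4) show "incidence_sign \<rho> w * cone v g (insert w \<rho>)
        = incidence_sign \<rho> w * incidence_sign (insert w r) v * g (insert w r)"
      by (simp add: cone_def mult.assoc)
  qed
  also have "\<dots> = - (\<Sum>w\<in>V - \<rho>. incidence_sign r v * incidence_sign r w * g (insert w r))"
    using opposite by (simp add: sum_negf[symmetric])
  finally have bd_cone: "bd (Pow V) (cone v g) \<rho>
      = - (\<Sum>w\<in>V - \<rho>. incidence_sign r v * incidence_sign r w * g (insert w r))" .
  have "V - r = insert v (V - \<rho>)" "v \<notin> V - \<rho>"
    using assms \<rho> \<open>v \<notin> r\<close> by auto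
  have "bd (Pow V) g r = (\<Sum>w\<in>insert v (V - \<rho>). incidence_sign r w * g (insert w r))"
    using assms(1) \<open>r \<subseteq> V\<close> \<open>V - r = insert v (V - \<rho>)\<close> by (simp add: bd_Pow)
  also have "\<dots> = incidence_sign r v * g \<rho> + (\<Sum>w\<in>V - \<rho>. incidence_sign r w * g (insert w r))"
    using assms(1) \<open>v \<notin> V - \<rho>\<close> by (simp add: \<rho>[symmetric])
  finally have "bd (Pow V) g r = incidence_sign r v * g \<rho> + (\<Sum>w\<in>V - \<rho>. incidence_sign r w * g (insert w r))" .
  moreover have "cone v (bd (Pow V) g) \<rho> = incidence_sign r v * bd (Pow V) g r"
    using assms(4) by (simp add: cone_def r_def)
  ultimately have "cone v (bd (Pow V) g) \<rho>
      = g \<rho> + (\<Sum>w\<in>V - \<rho>. incidence_sign r v * incidence_sign r w * g (insert w r))"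
    by (simp add: distrib_left sum_distrib_left mult.assoc[symmetric])
  with bd_cone show ?thesis by simp
qed

lemma bd_cone_cycle:
  assumes "finite V" "v \<in> V" "is_chain (Pow V) i c" "bd (Pow V) c = (\<lambda>_. 0)"
  shows "bd (Pow V) (cone v c) = c"
proof
  fix \<rho>
  show "bd (Pow V) (cone v c) \<rho> = c \<rho>"
  proof (cases "\<rho> \<subseteq> V")
    case True
    show ?thesis
    proof (cases "v \<in> \<rho>")
      case True
      have "cone v (bd (Pow V) c) \<rho> = 0" using assms(4) by (simp add: cone_def)
      with bd_cone_add_cone_bd_at_apex[OF assms(1,2) \<open>\<rho> \<subseteq> V\<close> True, of c] show ?thesis by simp
    next
      case False
      show ?thesis by (rule bd_cone_off_apex[OF assms(1,2) \<open>\<rho> \<subseteq> V\<close> False])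
    qed
  next
    case False
    then have "c \<rho> = 0" using is_chain_support[OF assms(3), of \<rho>] by auto
    with False show ?thesis by (simp add: bd_eq)
  qed
qed

lemma is_chain_cone:
  assumes "finite V" "v \<in> V" "is_chain (Pow V) i c"
  shows "is_chain (Pow V) (i + 1) (cone v c)"
  unfolding is_chain_def
proof (intro allI impI)
  fix \<sigma> assume nz: "cone v c \<sigma> \<noteq> 0"
  then have "v \<in> \<sigma>" "c (\<sigma> - {v}) \<noteq> 0" by (auto simp: cone_def split: if_splits)
  with is_chainD[OF assms(3)] have "\<sigma> - {v} \<in> Pow V" "int (card (\<sigma> - {v})) = i + 1"
    by blast+
  moreover from this(1) have "\<sigma> \<subseteq> V" "finite \<sigma>"
    using assms(1,2) by (auto intro: finite_subset)
  ultimately show "\<sigma> \<in> Pow V \<and> int (card \<sigma>) = i + 1 + 1"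
    using \<open>v \<in> \<sigma>\<close> card_Suc_Diff1[of \<sigma> v] by auto
qed

lemma hom_vanishes_Pow:
  assumes "finite V" "V \<noteq> {}"
  shows "hom_vanishes (Pow V) i"
proof -
  obtain v where "v \<in> V" using assms(2) by blast
  show ?thesis
    unfolding hom_vanishes_def
  proof (intro allI impI)
    fix c assume "is_chain (Pow V) i c \<and> bd (Pow V) c = (\<lambda>_. 0)"
    then show "\<exists>d. is_chain (Pow V) (i + 1) d \<and> bd (Pow V) d = c"
      using is_chain_cone[OF assms(1) \<open>v \<in> V\<close>] bd_cone_cycle[OF assms(1) \<open>v \<in> V\<close>] by blast
  qed
qed

lemma hom_vanishes_below:
  assumes "i \<le> -2"
  shows "hom_vanishes \<Delta> i"
  unfolding hom_vanishes_def
proof (intro allI impI)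
  fix c assume "is_chain \<Delta> i c \<and> bd \<Delta> c = (\<lambda>_. 0)"
  with assms have "c = (\<lambda>_. 0)" unfolding is_chain_def by fastforce
  then show "\<exists>d. is_chain \<Delta> (i + 1) d \<and> bd \<Delta> d = c"
    by (intro exI[of _ "\<lambda>_. 0"]) (simp add: is_chain_def bd_zero)
qed

lemma not_hom_vanishes_empty_complex: "\<not> hom_vanishes {{}} (-1)"
proof
  define c :: "'a set \<Rightarrow> int" where "c = (\<lambda>\<sigma>. if \<sigma> = {} then 1 else 0)"
  assume "hom_vanishes {{}::'a set} (-1)"
  moreover have "is_chain {{}} (-1) c" "bd {{}} c = (\<lambda>_. 0)"
    unfolding is_chain_def c_def by (auto simp: bd_eq fun_eq_iff)
  ultimately obtain d where "bd {{}} d = c" unfolding hom_vanishes_def by blast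
  then have "bd {{}} d {} = 1" by (simp add: c_def)
  then show False by (simp add: bd_eq)
qed


lemma conn_h_eqI:
  assumes "\<forall>j\<le>m. hom_vanishes \<Delta> j" "\<not> hom_vanishes \<Delta> (m + 1)"
  shows "conn_h \<Delta> = ereal (of_int m)"
proof -
  have "(GREATEST k. \<forall>i\<le>k. hom_vanishes \<Delta> i) = m"
  proof (rule Greatest_equality)
    show "\<forall>i\<le>m. hom_vanishes \<Delta> i" using assms(1) .
    show "k \<le> m" if "\<forall>i\<le>k. hom_vanishes \<Delta> i" for k
      using that assms(2) by (meson not_le zless_imp_add1_zle)
  qed
  with assms(2) show ?thesis unfolding conn_h_def by auto
qed

lemma first_non_vanishing_degree:
  assumes "\<not> hom_vanishes \<Delta> j"
  obtains m where "m < j" "\<forall>i\<le>m. hom_vanishes \<Delta> i" "\<not> hom_vanishes \<Delta> (m + 1)"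
proof -
  have "(\<forall>i\<le>k. hom_vanishes \<Delta> i) \<or> (\<exists>m<j. (\<forall>i\<le>m. hom_vanishes \<Delta> i) \<and> \<not> hom_vanishes \<Delta> (m + 1))"
    if "-2 \<le> k" "k \<le> j" for k
    using that
  proof (induction k rule: int_ge_induct)
    case base
    then show ?case using hom_vanishes_below by blast
  next
    case (step k)
    then have "k < j" "(\<forall>i\<le>k. hom_vanishes \<Delta> i) \<or> (\<exists>m<j. (\<forall>i\<le>m. hom_vanishes \<Delta> i) \<and> \<not> hom_vanishes \<Delta> (m + 1))"
      by auto
    moreover have "(\<forall>i\<le>k + 1. hom_vanishes \<Delta> i) \<longleftrightarrow> (\<forall>i\<le>k. hom_vanishes \<Delta> i) \<and> hom_vanishes \<Delta> (k + 1)"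
      by (auto simp: order_le_less)
    ultimately show ?case by blast
  qed
  moreover have "-2 \<le> j"
  proof (rule ccontr)
    assume "\<not> -2 \<le> j"
    then have "j \<le> -2" by simp
    then show False using assms hom_vanishes_below by blast
  qed
  ultimately show ?thesis using assms that by blast
qed

lemma conn_h_cases:
  obtains "conn_h \<Delta> = \<infinity>"
  | m where "conn_h \<Delta> = ereal (of_int m)" "\<forall>i\<le>m. hom_vanishes \<Delta> i" "\<not> hom_vanishes \<Delta> (m + 1)"
proof (cases "\<forall>i. hom_vanishes \<Delta> i")
  case True
  then show ?thesis using that(1) by (simp add: conn_h_def)
next
  case False
  then obtain m where "\<forall>i\<le>m. hom_vanishes \<Delta> i" "\<not> hom_vanishes \<Delta> (m + 1)"
    using first_non_vanishing_degree by blast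
  then show ?thesis using that(2) conn_h_eqI by blast
qed

lemma conn_h_less:
  assumes "\<not> hom_vanishes \<Delta> j"
  obtains m where "conn_h \<Delta> = ereal (of_int m)" "m < j"
proof -
  obtain m where "m < j" "\<forall>i\<le>m. hom_vanishes \<Delta> i" "\<not> hom_vanishes \<Delta> (m + 1)"
    using assms by (rule first_non_vanishing_degree)
  then show ?thesis using that conn_h_eqI by blast
qed

lemma ereal_le_add_of_minus_add_le:
  fixes x y :: ereal
  assumes "x - ereal d + 1 \<le> y"
  shows "x \<le> y + ereal (d - 1)"
  using assms by (cases x; cases y) auto

lemma conn_h_empty_complex: "conn_h {{}} = ereal (-2)"
proof -
  have "conn_h {{}} = ereal (of_int (-2))"
    by (rule conn_h_eqI) (use hom_vanishes_below not_hom_vanishes_empty_complex in auto)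
  then show ?thesis by simp
qed

lemma conn_h_Pow: "finite V \<Longrightarrow> V \<noteq> {} \<Longrightarrow> conn_h (Pow V) = \<infinity>"
  by (simp add: conn_h_def hom_vanishes_Pow)


section \<open>Removing the faces that contain a given face\<close>

text \<open>Chains on the faces of \<open>B\<close> containing \<open>F\<close> correspond, via \<open>link_chain\<close> and \<open>star_chain\<close>,
  to chains of \<open>L\<close> shifted in degree by \<open>card F\<close>, and the sign \<open>link_sign\<close> makes this
  correspondence commute with the boundary; so the relative homology of \<open>(B, A)\<close> is the shifted
  homology of \<open>L\<close>.\<close>

locale link_split =
  fixes A B L :: "'a::linorder set set" and F V :: "'a set"
  assumes finite_V: "finite V" and F_subset: "F \<subseteq> V"
    and B_subset: "\<Union>B \<subseteq> V" and L_subset: "\<Union>L \<subseteq> V - F"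
    and A_eq: "A = {\<sigma>\<in>B. \<not> F \<subseteq> \<sigma>}"
    and downclosed_B: "downclosed B"
    and union_in_B_iff: "\<And>\<tau>. \<tau> \<inter> F = {} \<Longrightarrow> F \<union> \<tau> \<in> B \<longleftrightarrow> \<tau> \<in> L"
begin

lemma finite_F: "finite F"
  using finite_V F_subset by (rule finite_subset[rotated])

lemma finite_faces_B: "\<sigma> \<in> B \<Longrightarrow> finite \<sigma>"
  using B_subset finite_V by (meson Union_upper finite_subset subset_trans)

lemma finite_faces_L: "\<tau> \<in> L \<Longrightarrow> finite \<tau>"
  using L_subset finite_V by (meson Union_upper finite_Diff finite_subset subset_trans)

lemma disjoint_faces_L: "\<tau> \<in> L \<Longrightarrow> \<tau> \<inter> F = {}"
  using L_subset by blast

lemma A_subset_B: "A \<subseteq> B"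
  using A_eq by blast

lemma bd_A_eq_bd_B:
  assumes supp: "\<And>\<sigma>. g \<sigma> \<noteq> 0 \<Longrightarrow> \<sigma> \<in> A"
  shows "bd A g = bd B g"
proof
  fix \<rho>
  have A_subset_V: "\<Union>A \<subseteq> V" using A_subset_B B_subset by blast
  show "bd A g \<rho> = bd B g \<rho>"
  proof (cases "\<rho> \<in> A")
    case True
    have "(if insert v \<rho> \<in> A then incidence_sign \<rho> v * g (insert v \<rho>) else 0)
        = (if insert v \<rho> \<in> B then incidence_sign \<rho> v * g (insert v \<rho>) else 0)" for v
      using A_subset_B supp by auto
    with True A_subset_B show ?thesis
      by (simp add: bd_eq_sum_superset[OF finite_V A_subset_V] bd_eq_sum_superset[OF finite_V B_subset] subset_iff)
  next
    case False
    show ?thesis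
    proof (cases "\<rho> \<in> B")
      case True
      \<comment> \<open>a face of \<open>B\<close> outside \<open>A\<close> contains \<open>F\<close>, and so do its cofaces, on which \<open>g\<close> vanishes\<close>
      with False A_eq have "F \<subseteq> \<rho>" by blast
      then have "g (insert v \<rho>) = 0" for v using supp A_eq by blast
      then have "(\<Sum>v\<in>\<Union>B - \<rho>. if insert v \<rho> \<in> B then incidence_sign \<rho> v * g (insert v \<rho>) else 0) = 0"
        by (intro sum.neutral) simp
      with False show ?thesis by (simp add: bd_eq)
    next
      case False
      with \<open>\<rho> \<notin> A\<close> show ?thesis by (simp add: bd_eq)
    qed
  qed
qed

definition link_sign :: "'a set \<Rightarrow> int" where
  "link_sign \<tau> = (-1) ^ (\<Sum>w\<in>\<tau>. card {u\<in>F. u < w})"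

lemma link_sign_square [simp]: "link_sign \<tau> * link_sign \<tau> = 1"
  unfolding link_sign_def by simp

lemma link_sign_insert: "finite \<tau> \<Longrightarrow> v \<notin> \<tau> \<Longrightarrow> link_sign (insert v \<tau>) = incidence_sign F v * link_sign \<tau>"
  unfolding link_sign_def incidence_sign_def by (simp add: power_add)

definition link_chain :: "('a set \<Rightarrow> int) \<Rightarrow> 'a set \<Rightarrow> int" where
  "link_chain g \<tau> = (if \<tau> \<inter> F = {} then link_sign \<tau> * g (F \<union> \<tau>) else 0)"

definition star_chain :: "('a set \<Rightarrow> int) \<Rightarrow> 'a set \<Rightarrow> int" where
  "star_chain w \<rho> = (if F \<subseteq> \<rho> then link_sign (\<rho> - F) * w (\<rho> - F) else 0)"

lemma bd_B_star_face:
  assumes "\<tau> \<in> L"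
  shows "bd B g (F \<union> \<tau>) = link_sign \<tau> * bd L (link_chain g) \<tau>"
proof -
  have disj: "\<tau> \<inter> F = {}" and "F \<union> \<tau> \<in> B" "finite \<tau>"
    using assms disjoint_faces_L union_in_B_iff finite_faces_L by auto
  have coface_term: "(if insert v (F \<union> \<tau>) \<in> B then incidence_sign (F \<union> \<tau>) v * g (insert v (F \<union> \<tau>)) else 0)
      = link_sign \<tau> * (if insert v \<tau> \<in> L then incidence_sign \<tau> v * link_chain g (insert v \<tau>) else 0)"
    if v: "v \<in> V - F - \<tau>" for v
  proof -
    have "insert v (F \<union> \<tau>) = F \<union> insert v \<tau>" "insert v \<tau> \<inter> F = {}"
      using v disj by auto
    moreover have "incidence_sign (F \<union> \<tau>) v = incidence_sign F v * incidence_sign \<tau> v"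
      using incidence_sign_Un[OF finite_F \<open>finite \<tau>\<close>] disj by blast
    moreover have "link_sign (insert v \<tau>) = incidence_sign F v * link_sign \<tau>"
      using link_sign_insert[OF \<open>finite \<tau>\<close>] v by blast
    ultimately show ?thesis
      using union_in_B_iff[of "insert v \<tau>"]
      by (simp add: link_chain_def mult_ac)
  qed
  have "bd B g (F \<union> \<tau>)
      = (\<Sum>v\<in>V - F - \<tau>. if insert v (F \<union> \<tau>) \<in> B then incidence_sign (F \<union> \<tau>) v * g (insert v (F \<union> \<tau>)) else 0)"
    using \<open>F \<union> \<tau> \<in> B\<close> by (simp add: bd_eq_sum_superset[OF finite_V B_subset] Diff_Un set_diff_eq)
  also have "\<dots> = (\<Sum>v\<in>V - F - \<tau>. link_sign \<tau> * (if insert v \<tau> \<in> L then incidence_sign \<tau> v * link_chain g (insert v \<tau>) else 0))"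
    by (rule sum.cong[OF refl]) (rule coface_term)
  also have "\<dots> = link_sign \<tau> * bd L (link_chain g) \<tau>"
    using assms by (simp add: bd_eq_sum_superset[of "V - F", OF _ L_subset] finite_V sum_distrib_left)
  finally show ?thesis .
qed

lemma is_chain_link_chain:
  assumes "is_chain B k c"
  shows "is_chain L (k - int (card F)) (link_chain c)"
  unfolding is_chain_def
proof (intro allI impI)
  fix \<tau> assume nz: "link_chain c \<tau> \<noteq> 0"
  then have disj: "\<tau> \<inter> F = {}" and "c (F \<union> \<tau>) \<noteq> 0"
    by (auto simp: link_chain_def split: if_splits)
  with assms have "F \<union> \<tau> \<in> B" "int (card (F \<union> \<tau>)) = k + 1"
    unfolding is_chain_def by auto
  with disj have "\<tau> \<in> L" "card (F \<union> \<tau>) = card F + card \<tau>"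
    using union_in_B_iff finite_faces_L finite_F by (auto intro: card_Un_disjoint)
  with \<open>int (card (F \<union> \<tau>)) = k + 1\<close> show "\<tau> \<in> L \<and> int (card \<tau>) = k - int (card F) + 1"
    by simp
qed

lemma is_chain_star_chain:
  assumes "is_chain L k w"
  shows "is_chain B (k + int (card F)) (star_chain w)"
  unfolding is_chain_def
proof (intro allI impI)
  fix \<rho> assume nz: "star_chain w \<rho> \<noteq> 0"
  then have "F \<subseteq> \<rho>" "w (\<rho> - F) \<noteq> 0"
    by (auto simp: star_chain_def split: if_splits)
  with assms have "\<rho> - F \<in> L" "int (card (\<rho> - F)) = k + 1" "\<rho> = F \<union> (\<rho> - F)"
    unfolding is_chain_def by auto
  moreover from this have "card \<rho> = card F + card (\<rho> - F)"
    using finite_F finite_faces_L by (metis Diff_disjoint card_Un_disjoint)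
  ultimately show "\<rho> \<in> B \<and> int (card \<rho>) = k + int (card F) + 1"
    using union_in_B_iff[of "\<rho> - F"] by auto
qed

lemma link_chain_star_chain:
  assumes "is_chain L k w"
  shows "link_chain (star_chain w) = w"
proof
  fix \<tau>
  show "link_chain (star_chain w) \<tau> = w \<tau>"
  proof (cases "\<tau> \<inter> F = {}")
    case True
    then have "(F \<union> \<tau>) - F = \<tau>" by blast
    with True show ?thesis by (simp add: link_chain_def star_chain_def mult.assoc[symmetric])
  next
    case False
    then have "w \<tau> = 0" using assms disjoint_faces_L unfolding is_chain_def by blast
    with False show ?thesis by (simp add: link_chain_def)
  qed
qed

lemma bd_link_chain_eq_0:
  assumes "\<And>\<tau>. \<tau> \<in> L \<Longrightarrow> bd B c (F \<union> \<tau>) = 0"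
  shows "bd L (link_chain c) = (\<lambda>_. 0)"
proof
  fix \<tau>
  show "bd L (link_chain c) \<tau> = 0"
  proof (cases "\<tau> \<in> L")
    case True
    then have "link_sign \<tau> * (link_sign \<tau> * bd L (link_chain c) \<tau>) = 0"
      using assms bd_B_star_face by simp
    then show ?thesis by (simp add: mult.assoc[symmetric])
  qed (simp add: bd_eq)
qed

lemma bd_star_chain:
  assumes w: "is_chain L k w" "bd L w = link_chain c" and c: "is_chain B j c" and "F \<subseteq> \<rho>"
  shows "bd B (star_chain w) \<rho> = c \<rho>"
proof -
  define \<tau> where "\<tau> = \<rho> - F"
  have \<rho>: "\<rho> = F \<union> \<tau>" and disj: "\<tau> \<inter> F = {}"
    using \<open>F \<subseteq> \<rho>\<close> unfolding \<tau>_def by blast+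
  show ?thesis
  proof (cases "\<tau> \<in> L")
    case True
    have "bd B (star_chain w) \<rho> = link_sign \<tau> * bd L (link_chain (star_chain w)) \<tau>"
      unfolding \<rho> by (rule bd_B_star_face[OF True])
    also have "\<dots> = link_sign \<tau> * link_chain c \<tau>"
      using link_chain_star_chain[OF w(1)] w(2) by simp
    also have "\<dots> = c \<rho>"
      using disj \<rho> by (simp add: link_chain_def mult.assoc[symmetric])
    finally show ?thesis .
  next
    case False
    then have "\<rho> \<notin> B" using union_in_B_iff[OF disj] \<rho> by simp
    with c show ?thesis unfolding is_chain_def by (auto simp: bd_eq)
  qed
qed

lemma chain_A_after_star_correction:
  assumes w: "is_chain L (j + 1 - int (card F)) w" "bd L w = link_chain c" and c: "is_chain B j c"
  shows "is_chain B (j + 1) (star_chain w)"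
    and "is_chain A j (\<lambda>\<rho>. c \<rho> - bd B (star_chain w) \<rho>)"
proof -
  show P: "is_chain B (j + 1) (star_chain w)"
    using is_chain_star_chain[OF w(1)] by simp
  have "is_chain B j (\<lambda>\<rho>. c \<rho> - bd B (star_chain w) \<rho>)"
    using c is_chain_bd[OF _ P] finite_faces_B by (auto intro: is_chain_diff)
  moreover have "\<not> F \<subseteq> \<rho>" if "c \<rho> - bd B (star_chain w) \<rho> \<noteq> 0" for \<rho>
    using that bd_star_chain[OF w c] by auto
  ultimately show "is_chain A j (\<lambda>\<rho>. c \<rho> - bd B (star_chain w) \<rho>)"
    unfolding is_chain_def A_eq by auto
qed

lemma bd_bd_B: "is_chain B k g \<Longrightarrow> bd B (bd B g) = (\<lambda>_. 0)"
  using bd_bd_eq_0[OF finite_V B_subset downclosed_B] finite_faces_B is_chain_support by blast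

lemma hom_vanishes_B:
  assumes hA: "hom_vanishes A i" and hL: "hom_vanishes L (i - int (card F))"
  shows "hom_vanishes B i"
  unfolding hom_vanishes_def
proof (intro allI impI)
  fix c assume c: "is_chain B i c \<and> bd B c = (\<lambda>_. 0)"
  then have "is_chain L (i - int (card F)) (link_chain c)" "bd L (link_chain c) = (\<lambda>_. 0)"
    using is_chain_link_chain bd_link_chain_eq_0 by auto
  then obtain w where w: "is_chain L (i + 1 - int (card F)) w" "bd L w = link_chain c"
    using hL unfolding hom_vanishes_def by (auto simp: algebra_simps)
  let ?P = "star_chain w"
  let ?c' = "\<lambda>\<rho>. c \<rho> - bd B ?P \<rho>"
  have P: "is_chain B (i + 1) ?P" and c': "is_chain A i ?c'"
    using chain_A_after_star_correction[OF w] c by auto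
  have "bd A ?c' = bd B ?c'"
    by (rule bd_A_eq_bd_B) (rule is_chain_support[OF c'])
  also have "\<dots> = (\<lambda>_. 0)"
    using c bd_bd_B[OF P] by (simp add: bd_diff)
  finally obtain d where d: "is_chain A (i + 1) d" "bd A d = ?c'"
    using hA c' unfolding hom_vanishes_def by blast
  then have "bd B d = ?c'"
    using is_chain_support bd_A_eq_bd_B by metis
  then have "bd B (\<lambda>\<sigma>. d \<sigma> + ?P \<sigma>) = c"
    by (simp add: bd_add)
  moreover have "is_chain B (i + 1) (\<lambda>\<sigma>. d \<sigma> + ?P \<sigma>)"
    using d(1) P is_chain_mono[OF A_subset_B] is_chain_add by blast
  ultimately show "\<exists>d. is_chain B (i + 1) d \<and> bd B d = c" by blast
qed

lemma hom_vanishes_A: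
  assumes hB: "hom_vanishes B i" and hL: "hom_vanishes L (i + 1 - int (card F))"
  shows "hom_vanishes A i"
  unfolding hom_vanishes_def
proof (intro allI impI)
  fix c assume c: "is_chain A i c \<and> bd A c = (\<lambda>_. 0)"
  then have "bd B c = (\<lambda>_. 0)" "is_chain B i c"
    using is_chain_support bd_A_eq_bd_B is_chain_mono[OF A_subset_B] by metis+
  then obtain d where d: "is_chain B (i + 1) d" "bd B d = c"
    using hB unfolding hom_vanishes_def by blast
  \<comment> \<open>\<open>c\<close> vanishes on the faces \<open>F \<union> \<tau>\<close>, as these are not in \<open>A\<close>\<close>
  moreover have "bd B d (F \<union> \<tau>) = 0" for \<tau>
    using c d(2) is_chain_support A_eq by blast
  ultimately have "is_chain L (i + 1 - int (card F)) (link_chain d)" "bd L (link_chain d) = (\<lambda>_. 0)"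
    using is_chain_link_chain bd_link_chain_eq_0 by auto
  then obtain w where w: "is_chain L (i + 1 + 1 - int (card F)) w" "bd L w = link_chain d"
    using hL unfolding hom_vanishes_def by (auto simp: algebra_simps)
  let ?P = "star_chain w"
  have P: "is_chain B (i + 1 + 1) ?P" and d': "is_chain A (i + 1) (\<lambda>\<rho>. d \<rho> - bd B ?P \<rho>)"
    using chain_A_after_star_correction[OF w d(1)] by auto
  have "bd A (\<lambda>\<rho>. d \<rho> - bd B ?P \<rho>) = bd B (\<lambda>\<rho>. d \<rho> - bd B ?P \<rho>)"
    by (rule bd_A_eq_bd_B) (rule is_chain_support[OF d'])
  also have "\<dots> = c"
    using d(2) bd_bd_B[OF P] by (simp add: bd_diff)
  finally show "\<exists>d. is_chain A (i + 1) d \<and> bd A d = c"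
    using d' by blast
qed

lemma conn_h_ge_min: "min (conn_h B) (conn_h L + ereal (real (card F) - 1)) \<le> conn_h A"
proof (cases A rule: conn_h_cases)
  case 1
  then show ?thesis by simp
next
  case (2 k)
  then have "\<not> hom_vanishes B (k + 1) \<or> \<not> hom_vanishes L (k + 2 - int (card F))"
    using hom_vanishes_A[of "k + 1"] by (auto simp: algebra_simps)
  then show ?thesis
  proof
    assume "\<not> hom_vanishes B (k + 1)"
    then obtain m where "conn_h B = ereal (of_int m)" "m < k + 1" by (rule conn_h_less)
    with 2 have "conn_h B \<le> conn_h A" by simp
    then show ?thesis by (rule min.coboundedI1)
  next
    assume "\<not> hom_vanishes L (k + 2 - int (card F))"
    then obtain p where p: "conn_h L = ereal (of_int p)" "p < k + 2 - int (card F)" by (rule conn_h_less)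
    then have "real_of_int p + (real (card F) - 1) \<le> real_of_int k" by linarith
    with p 2 have "conn_h L + ereal (real (card F) - 1) \<le> conn_h A" by simp
    then show ?thesis by (rule min.coboundedI2)
  qed
qed

lemma conn_h_le_min:
  assumes link: "conn_h A - ereal (real (card F)) + 1 \<le> conn_h L"
  shows "conn_h A \<le> min (conn_h B) (conn_h L + ereal (real (card F) - 1))"
proof -
  have A_le_L: "conn_h A \<le> conn_h L + ereal (real (card F) - 1)"
    using link by (rule ereal_le_add_of_minus_add_le)
  moreover have "conn_h A \<le> conn_h B"
  proof (cases B rule: conn_h_cases)
    case 1
    then show ?thesis by simp
  next
    case (2 m)
    then have "\<not> hom_vanishes A (m + 1) \<or> \<not> hom_vanishes L (m + 1 - int (card F))"
      using hom_vanishes_B by blast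
    then show ?thesis
    proof
      assume "\<not> hom_vanishes A (m + 1)"
      then obtain k where "conn_h A = ereal (of_int k)" "k < m + 1" by (rule conn_h_less)
      with 2 show ?thesis by simp
    next
      assume "\<not> hom_vanishes L (m + 1 - int (card F))"
      then obtain p where p: "conn_h L = ereal (of_int p)" "p < m + 1 - int (card F)"
        by (rule conn_h_less)
      then have "real_of_int p + (real (card F) - 1) \<le> real_of_int m" by linarith
      with p 2 have "conn_h L + ereal (real (card F) - 1) \<le> conn_h B" by simp
      with A_le_L show ?thesis by (rule order_trans)
    qed
  qed
  ultimately show ?thesis by simp
qed

end


section \<open>Independence complexes of hypergraphs\<close>

lemma hypergraph_finite_edges:
  assumes "hypergraph V C"
  shows "finite C"
proof -
  from assms have "C \<subseteq> Pow V" "finite V" unfolding hypergraph_def by auto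
  then show ?thesis using finite_subset by blast
qed

lemma hypergraph_edgeD: "hypergraph V C \<Longrightarrow> E \<in> C \<Longrightarrow> E \<subseteq> V \<and> 2 \<le> card E \<and> finite E"
  unfolding hypergraph_def by (auto intro: finite_subset)

lemma hypergraph_antichain: "hypergraph V C \<Longrightarrow> E \<in> C \<Longrightarrow> E' \<in> C \<Longrightarrow> E \<subseteq> E' \<Longrightarrow> E = E'"
  unfolding hypergraph_def by blast

lemma hypergraph_Diff: "hypergraph V C \<Longrightarrow> hypergraph V (C - {F})"
  unfolding hypergraph_def by blast

lemma hypergraph_empty_vertices: "hypergraph {} C \<Longrightarrow> C = {}"
  using hypergraph_edgeD[of "{}" C] by force

lemma Ind_iff: "S \<in> Ind V C \<longleftrightarrow> S \<subseteq> V \<and> (\<forall>E\<in>C. \<not> E \<subseteq> S)"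
  unfolding Ind_def by blast

lemma Ind_no_edges: "Ind V {} = Pow V"
  by (auto simp: Ind_def)

lemma nbhd_iff: "v \<in> nbhd C F \<longleftrightarrow> (\<exists>E\<in>C. E - F = {v})"
proof -
  have singleton: "card S = 1 \<and> v \<in> S \<longleftrightarrow> S = {v}" for S :: "'a set"
  proof
    assume h: "card S = 1 \<and> v \<in> S"
    then have "card S = 1" by simp
    then obtain x where "S = {x}" by (rule card_1_singletonE)
    with h show "S = {v}" by simp
  qed simp
  have "v \<in> nbhd C F \<longleftrightarrow> (\<exists>E\<in>C. card (E - F) = 1 \<and> v \<in> E - F)"
    by (auto simp: nbhd_def)
  also have "\<dots> \<longleftrightarrow> (\<exists>E\<in>C. E - F = {v})"
    by (simp only: singleton)
  finally show ?thesis .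
qed

lemma colon_E_iff: "G \<in> colon_E C F \<longleftrightarrow>
    (\<exists>E\<in>C - {F}. G = E - F) \<and> \<not> (\<exists>E\<in>C - {F}. E - F \<subset> G) \<and> 2 \<le> card G"
  unfolding colon_E_def Let_def by blast

lemma colon_EE:
  assumes "G \<in> colon_E C F"
  obtains E where "E \<in> C" "E \<noteq> F" "G = E - F"
  using assms unfolding colon_E_iff by blast

lemma colon_E_minimal: "G \<in> colon_E C F \<Longrightarrow> E \<in> C \<Longrightarrow> E \<noteq> F \<Longrightarrow> \<not> E - F \<subset> G"
  unfolding colon_E_iff by blast

lemma colon_E_card: "G \<in> colon_E C F \<Longrightarrow> 2 \<le> card G"
  unfolding colon_E_iff by blast

lemma colon_EI:
  assumes "E \<in> C" "E \<noteq> F" "2 \<le> card (E - F)"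
    and "\<And>E'. E' \<in> C \<Longrightarrow> E' \<noteq> F \<Longrightarrow> \<not> E' - F \<subset> E - F"
  shows "E - F \<in> colon_E C F"
  using assms unfolding colon_E_iff by blast

text \<open>Take a minimal \<open>E' - F\<close> below \<open>E - F\<close>; it is nonempty since \<open>C\<close> is an antichain.\<close>

lemma colon_edge_or_nbhd_below:
  assumes hyp: "hypergraph V C" and "F \<in> C" "E \<in> C" "E \<noteq> F"
  obtains G where "G \<in> colon_E C F" "G \<subseteq> E - F"
  | v where "v \<in> nbhd C F" "v \<in> E - F"
proof -
  let ?M = "(\<lambda>E. E - F) ` (C - {F})"
  have "finite ?M" using hypergraph_finite_edges[OF hyp] by simp
  moreover have "E - F \<in> ?M" using assms(3,4) by simp
  ultimately obtain H where "H \<in> ?M" "H \<subseteq> E - F" and minimal: "\<forall>H'\<in>?M. H' \<subseteq> H \<longrightarrow> H = H'"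
    by (meson finite_has_minimal2)
  then obtain E' where E': "E' \<in> C" "E' \<noteq> F" "H = E' - F" by blast
  have "\<not> E' \<subseteq> F"
    using hypergraph_antichain[OF hyp E'(1) \<open>F \<in> C\<close>] E'(2) by blast
  then have "card H \<noteq> 0"
    using E' hypergraph_edgeD[OF hyp \<open>E' \<in> C\<close>] by auto
  then consider "card H = 1" | "2 \<le> card H" by linarith
  then show ?thesis
  proof cases
    case 1
    then obtain v where "H = {v}" by (rule card_1_singletonE)
    with E' have "v \<in> nbhd C F" unfolding nbhd_iff by blast
    moreover have "v \<in> E - F" using \<open>H = {v}\<close> \<open>H \<subseteq> E - F\<close> by blast
    ultimately show ?thesis by (rule that(2))
  next
    case 2
    have no_smaller: "\<not> E'' - F \<subset> E' - F" if "E'' \<in> C" "E'' \<noteq> F" for E''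
    proof
      assume psub: "E'' - F \<subset> E' - F"
      have "E'' - F \<in> ?M" using that by simp
      with minimal psub E'(3) have "H = E'' - F" by blast
      with psub E'(3) show False by simp
    qed
    have "H \<in> colon_E C F"
      unfolding E'(3) by (intro colon_EI E'(1,2) no_smaller) (use 2 E'(3) in simp_all)
    then show ?thesis using \<open>H \<subseteq> E - F\<close> by (rule that(1))
  qed
qed

lemma Ind_colon_if_Un_in_Ind_Diff:
  assumes "F \<union> \<tau> \<in> Ind V (C - {F})" and disj: "\<tau> \<inter> F = {}"
  shows "\<tau> \<in> Ind (colon_V V C F) (colon_E C F)"
proof -
  from assms(1) have "F \<union> \<tau> \<subseteq> V" and no_edge: "\<And>E. E \<in> C \<Longrightarrow> E \<noteq> F \<Longrightarrow> \<not> E \<subseteq> F \<union> \<tau>"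
    unfolding Ind_iff by auto
  have "v \<notin> nbhd C F" if "v \<in> \<tau>" for v
  proof
    assume "v \<in> nbhd C F"
    then obtain E where "E \<in> C" "E - F = {v}" by (auto simp: nbhd_iff)
    moreover from this have "E \<noteq> F" "E \<subseteq> F \<union> \<tau>" using that by auto
    ultimately show False using no_edge by blast
  qed
  then have "\<tau> \<subseteq> colon_V V C F"
    using \<open>F \<union> \<tau> \<subseteq> V\<close> disj unfolding colon_V_def by blast
  moreover have "\<not> G \<subseteq> \<tau>" if G: "G \<in> colon_E C F" for G
  proof
    assume "G \<subseteq> \<tau>"
    obtain E where "E \<in> C" "E \<noteq> F" and G_eq: "G = E - F" using G by (rule colon_EE)
    have "E \<subseteq> F \<union> \<tau>" using \<open>G \<subseteq> \<tau>\<close> G_eq by auto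
    with no_edge \<open>E \<in> C\<close> \<open>E \<noteq> F\<close> show False by blast
  qed
  ultimately show ?thesis
    unfolding Ind_iff by blast
qed

lemma Un_in_Ind_Diff_if_Ind_colon:
  assumes hyp: "hypergraph V C" and "F \<in> C" and "\<tau> \<in> Ind (colon_V V C F) (colon_E C F)"
  shows "F \<union> \<tau> \<in> Ind V (C - {F})"
proof -
  from assms(3) have \<tau>: "\<tau> \<subseteq> colon_V V C F" and no_edge: "\<And>G. G \<in> colon_E C F \<Longrightarrow> \<not> G \<subseteq> \<tau>"
    unfolding Ind_iff by auto
  have "\<not> E \<subseteq> F \<union> \<tau>" if "E \<in> C" "E \<noteq> F" for E
  proof
    assume "E \<subseteq> F \<union> \<tau>"
    then have "E - F \<subseteq> \<tau>" by blast
    then show False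
    proof (cases rule: colon_edge_or_nbhd_below[OF hyp \<open>F \<in> C\<close> that])
      case (1 G)
      with \<open>E - F \<subseteq> \<tau>\<close> no_edge show False by blast
    next
      case (2 v)
      with \<open>E - F \<subseteq> \<tau>\<close> \<tau> show False unfolding colon_V_def by blast
    qed
  qed
  moreover have "F \<union> \<tau> \<subseteq> V"
    using hypergraph_edgeD[OF hyp \<open>F \<in> C\<close>] \<tau> unfolding colon_V_def by blast
  ultimately show ?thesis
    unfolding Ind_iff by blast
qed

lemma Un_in_Ind_Diff_iff:
  assumes "hypergraph V C" "F \<in> C" "\<tau> \<inter> F = {}"
  shows "F \<union> \<tau> \<in> Ind V (C - {F}) \<longleftrightarrow> \<tau> \<in> Ind (colon_V V C F) (colon_E C F)"
  using Ind_colon_if_Un_in_Ind_Diff[OF _ assms(3)] Un_in_Ind_Diff_if_Ind_colon[OF assms(1,2)] by blast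

lemma hypergraph_colon:
  assumes hyp: "hypergraph V C" and "F \<in> C"
  shows "hypergraph (colon_V V C F) (colon_E C F)"
  unfolding hypergraph_def
proof (intro conjI ballI impI)
  show "finite (colon_V V C F)"
    using hyp unfolding hypergraph_def colon_V_def by simp
next
  fix G assume G: "G \<in> colon_E C F"
  then show "2 \<le> card G" by (rule colon_E_card)
  obtain E where "E \<in> C" "E \<noteq> F" and G_eq: "G = E - F" using G by (rule colon_EE)
  \<comment> \<open>a neighbour \<open>v \<in> G\<close> would give the smaller member \<open>{v}\<close> of the family\<close>
  have "v \<notin> nbhd C F" if "v \<in> G" for v
  proof
    assume "v \<in> nbhd C F"
    then obtain E' where "E' \<in> C" "E' - F = {v}" by (auto simp: nbhd_iff)
    moreover have "{v} \<subset> G" using that \<open>2 \<le> card G\<close> by auto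
    moreover have "E' \<noteq> F" using \<open>E' - F = {v}\<close> by auto
    ultimately show False using colon_E_minimal[OF G \<open>E' \<in> C\<close>] by simp
  qed
  then show "G \<subseteq> colon_V V C F"
    using hypergraph_edgeD[OF hyp \<open>E \<in> C\<close>] unfolding colon_V_def G_eq by blast
next
  fix G G' assume "G \<in> colon_E C F" "G' \<in> colon_E C F" "G \<subseteq> G'"
  show "G = G'"
  proof (rule ccontr)
    assume "G \<noteq> G'"
    with \<open>G \<subseteq> G'\<close> have "G \<subset> G'" by blast
    obtain E where "E \<in> C" "E \<noteq> F" and G_eq: "G = E - F" using \<open>G \<in> colon_E C F\<close> by (rule colon_EE)
    with colon_E_minimal[OF \<open>G' \<in> colon_E C F\<close>] \<open>G \<subset> G'\<close> show False by simp
  qed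
qed

lemma colon_E_subset: "colon_E C F \<subseteq> (\<lambda>E. E - F) ` (C - {F})"
proof
  fix G assume "G \<in> colon_E C F"
  then obtain E where "E \<in> C" "E \<noteq> F" "G = E - F" by (rule colon_EE)
  then show "G \<in> (\<lambda>E. E - F) ` (C - {F})" by simp
qed

lemma finite_colon_E: "finite C \<Longrightarrow> finite (colon_E C F)"
  using colon_E_subset by (rule finite_subset) simp

lemma card_colon_E_less:
  assumes "finite C" "F \<in> C"
  shows "card (colon_E C F) < card C"
proof -
  have "card (colon_E C F) \<le> card ((\<lambda>E. E - F) ` (C - {F}))"
    using assms(1) by (intro card_mono colon_E_subset) simp
  also have "\<dots> \<le> card (C - {F})" by (rule card_image_le) (use assms(1) in simp)
  also have "\<dots> < card C" using assms by (rule card_Diff1_less)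
  finally show ?thesis .
qed

lemma link_split_Ind:
  assumes hyp: "hypergraph V C" and "F \<in> C"
  shows "link_split (Ind V C) (Ind V (C - {F})) (Ind (colon_V V C F) (colon_E C F)) F V"
proof
  show "finite V" using hyp unfolding hypergraph_def by blast
  show "F \<subseteq> V" using hypergraph_edgeD[OF assms] by blast
  show "\<Union> (Ind V (C - {F})) \<subseteq> V" "\<Union> (Ind (colon_V V C F) (colon_E C F)) \<subseteq> V - F"
    unfolding Ind_def colon_V_def by blast+
  show "Ind V C = {\<sigma> \<in> Ind V (C - {F}). \<not> F \<subseteq> \<sigma>}"
    using \<open>F \<in> C\<close> unfolding Ind_def by blast
  show "downclosed (Ind V (C - {F}))"
    unfolding downclosed_def Ind_def by blast
  show "F \<union> \<tau> \<in> Ind V (C - {F}) \<longleftrightarrow> \<tau> \<in> Ind (colon_V V C F) (colon_E C F)" if "\<tau> \<inter> F = {}" for \<tau>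
    using Un_in_Ind_Diff_iff[OF assms that] .
qed


lemma psi_aux_fuel_cong:
  "finite C \<Longrightarrow> card C \<le> n \<Longrightarrow> card C \<le> m \<Longrightarrow> psi_aux n V C = psi_aux m V C"
proof (induction n arbitrary: m V C)
  case 0
  then show ?case by (cases m) simp_all
next
  case (Suc n)
  show ?case
  proof (cases m)
    case 0
    with Suc.prems show ?thesis by simp
  next
    case (Suc m')
    have "psi_aux n V (C - {F}) = psi_aux m' V (C - {F})"
      and "psi_aux n (colon_V V C F) (colon_E C F) = psi_aux m' (colon_V V C F) (colon_E C F)"
      if "F \<in> C" for F
    proof -
      have "card (C - {F}) < card C" "card (colon_E C F) < card C"
        using card_Diff1_less[OF Suc.prems(1) that] card_colon_E_less[OF Suc.prems(1) that] .
      moreover have "finite (colon_E C F)"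
        using Suc.prems(1) by (rule finite_colon_E)
      ultimately show "psi_aux n V (C - {F}) = psi_aux m' V (C - {F})"
        and "psi_aux n (colon_V V C F) (colon_E C F) = psi_aux m' (colon_V V C F) (colon_E C F)"
        using Suc.IH Suc.prems \<open>m = Suc m'\<close> by auto
    qed
    then show ?thesis
      using \<open>m = Suc m'\<close> by (auto intro!: arg_cong[where f = Max] image_cong)
  qed
qed

lemma psi_eq:
  assumes "finite C"
  shows "psi V C = (if V = {} then 0 else if C = {} then \<infinity> else
     Max ((\<lambda>F. min (psi V (C - {F})) (psi (colon_V V C F) (colon_E C F) + ereal (real (card F) - 1))) ` C))"
proof (cases "C = {}")
  case True
  then show ?thesis by (simp add: psi_def)
next
  case False
  with assms obtain n where n: "card C = Suc n" by (metis card_0_eq not0_implies_Suc)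
  have "psi_aux n V (C - {F}) = psi V (C - {F})"
    and "psi_aux n (colon_V V C F) (colon_E C F) = psi (colon_V V C F) (colon_E C F)"
    if "F \<in> C" for F
  proof -
    have "card (C - {F}) \<le> n" "card (colon_E C F) \<le> n"
      using assms that n card_colon_E_less[OF assms that] by (auto simp: card_Diff_singleton)
    moreover have "finite (colon_E C F)"
      using assms by (rule finite_colon_E)
    ultimately show "psi_aux n V (C - {F}) = psi V (C - {F})"
      and "psi_aux n (colon_V V C F) (colon_E C F) = psi (colon_V V C F) (colon_E C F)"
      unfolding psi_def using assms by (auto intro: psi_aux_fuel_cong)
  qed
  then have image_eq:
    "(\<lambda>F. min (psi_aux n V (C - {F})) (psi_aux n (colon_V V C F) (colon_E C F) + ereal (real (card F) - 1))) ` C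
     = (\<lambda>F. min (psi V (C - {F})) (psi (colon_V V C F) (colon_E C F) + ereal (real (card F) - 1))) ` C"
    by (intro image_cong refl) simp
  have "psi V C = psi_aux (Suc n) V C" by (simp add: psi_def n)
  also have "\<dots> = (if V = {} then 0 else if C = {} then \<infinity> else
     Max ((\<lambda>F. min (psi V (C - {F})) (psi (colon_V V C F) (colon_E C F) + ereal (real (card F) - 1))) ` C))"
    unfolding psi_aux.simps(2) image_eq ..
  finally show ?thesis .
qed

lemma min_add_distrib_left_linorder:
  fixes x y d :: "'a::{linorder, ordered_ab_semigroup_add}"
  shows "min (x + d) (y + d) = min x y + d"
proof (cases "x \<le> y")
  case True
  then show ?thesis by (simp add: add_right_mono min.absorb1)
next
  case False
  then have "y \<le> x" by simp
  then show ?thesis by (simp add: add_right_mono min.absorb2)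
qed

lemma min_add_distrib_left_shifted:
  fixes a b c d :: "'a::{linorder, ordered_ab_semigroup_add}"
  shows "min (a + d) (b + d + c) = min a (b + c) + d"
proof -
  have "b + d + c = b + c + d" by (simp add: ac_simps)
  then show ?thesis by (simp add: min_add_distrib_left_linorder)
qed

lemma psi_le_conn_h:
  assumes "hypergraph V C"
  shows "psi V C \<le> conn_h (Ind V C) + 2"
  using assms
proof (induction "card C" arbitrary: V C rule: less_induct)
  case less
  have "finite C" using hypergraph_finite_edges[OF less.prems] .
  have "finite V" using less.prems unfolding hypergraph_def by blast
  consider "V = {}" | "V \<noteq> {}" "C = {}" | "V \<noteq> {}" "C \<noteq> {}" by blast
  then show ?case
  proof cases
    case 1
    with less.prems have "C = {}" using hypergraph_empty_vertices by simp
    with 1 have "Ind V C = {{}}" by (auto simp: Ind_def)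
    with 1 show ?thesis by (simp add: psi_eq[OF \<open>finite C\<close>] conn_h_empty_complex)
  next
    case 2
    with \<open>finite V\<close> show ?thesis by (simp add: Ind_no_edges conn_h_Pow)
  next
    case 3
    have "min (psi V (C - {F})) (psi (colon_V V C F) (colon_E C F) + ereal (real (card F) - 1))
        \<le> conn_h (Ind V C) + 2" if "F \<in> C" for F
    proof -
      interpret link_split "Ind V C" "Ind V (C - {F})" "Ind (colon_V V C F) (colon_E C F)" F V
        using link_split_Ind[OF less.prems that] .
      have "psi V (C - {F}) \<le> conn_h (Ind V (C - {F})) + 2"
        using less.hyps[OF card_Diff1_less[OF \<open>finite C\<close> that] hypergraph_Diff[OF less.prems]] .
      moreover have "psi (colon_V V C F) (colon_E C F) \<le> conn_h (Ind (colon_V V C F) (colon_E C F)) + 2"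
        using less.hyps[OF card_colon_E_less[OF \<open>finite C\<close> that] hypergraph_colon[OF less.prems that]] .
      ultimately have "min (psi V (C - {F})) (psi (colon_V V C F) (colon_E C F) + ereal (real (card F) - 1))
          \<le> min (conn_h (Ind V (C - {F})) + 2) (conn_h (Ind (colon_V V C F) (colon_E C F)) + 2 + ereal (real (card F) - 1))"
        by (intro min.mono add_right_mono)
      also have "\<dots> = min (conn_h (Ind V (C - {F}))) (conn_h (Ind (colon_V V C F) (colon_E C F)) + ereal (real (card F) - 1)) + 2"
        by (rule min_add_distrib_left_shifted)
      also have "\<dots> \<le> conn_h (Ind V C) + 2"
        using conn_h_ge_min by (rule add_right_mono)
      finally show ?thesis .
    qed
    with 3 \<open>finite C\<close> show ?thesis by (simp add: psi_eq[OF \<open>finite C\<close>] Max_le_iff)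
  qed
qed

lemma conn_h_le_psi:
  assumes "properly_splitted V C" "hypergraph V C"
  shows "conn_h (Ind V C) + 2 \<le> psi V C"
  using assms
proof (induction rule: properly_splitted.induct)
  case (empty V)
  show ?case
  proof (cases "V = {}")
    case True
    then have "Ind V {} = {{}}" by (auto simp: Ind_def)
    with True show ?thesis by (simp add: psi_eq[of "{}"] conn_h_empty_complex)
  next
    case False
    then show ?thesis by (simp add: psi_eq[of "{}"])
  qed
next
  case (split F C V)
  interpret link_split "Ind V C" "Ind V (C - {F})" "Ind (colon_V V C F) (colon_E C F)" F V
    using link_split_Ind[OF split.prems split.hyps(1)] .
  have "finite C" using hypergraph_finite_edges[OF split.prems] .
  have "V \<noteq> {}" "C \<noteq> {}"
    using split.hyps(1) hypergraph_empty_vertices[of C] split.prems by auto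
  have "conn_h (Ind V C) + 2
      \<le> min (conn_h (Ind V (C - {F}))) (conn_h (Ind (colon_V V C F) (colon_E C F)) + ereal (real (card F) - 1)) + 2"
    using conn_h_le_min[OF split.hyps(2)] by (rule add_right_mono)
  also have "\<dots> = min (conn_h (Ind V (C - {F})) + 2) (conn_h (Ind (colon_V V C F) (colon_E C F)) + 2 + ereal (real (card F) - 1))"
    by (rule min_add_distrib_left_shifted[symmetric])
  also have "\<dots> \<le> min (psi V (C - {F})) (psi (colon_V V C F) (colon_E C F) + ereal (real (card F) - 1))"
    using split.IH hypergraph_Diff[OF split.prems] hypergraph_colon[OF split.prems split.hyps(1)]
    by (intro min.mono add_right_mono) auto
  also have "\<dots> \<le> Max ((\<lambda>F. min (psi V (C - {F})) (psi (colon_V V C F) (colon_E C F) + ereal (real (card F) - 1))) ` C)"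
    using \<open>finite C\<close> split.hyps(1) by (intro Max_ge) auto
  also have "\<dots> = psi V C"
    using \<open>V \<noteq> {}\<close> \<open>C \<noteq> {}\<close> by (simp add: psi_eq[OF \<open>finite C\<close>])
  finally show ?case .
qed

theorem theorem3p15:
  fixes V :: "'a::linorder set" and C :: "'a set set"
  assumes "hypergraph V C"
    and "properly_splitted V C"
  shows "psi V C = conn_h (Ind V C) + 2"
  using psi_le_conn_h[OF assms(1)] conn_h_le_psi[OF assms(2,1)] by (rule antisym)

end
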